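(* Let $\mathcal A$ be a commutative semiring, $n\ge2$, $V_n$ the free $\mathcal A$-module with basis $b_0,\dots,b_{n-1}$, $f\in\operatorname{End}_{\mathcal A}(V_n)$, $D(z)$ the Hasse–Schmidt derivation on $\bigwedge V_n$ associated with $f$ and $\overline D(z)$ its quasi-inverse on $\bigwedge^2V_n$. Then for all $u,v\in V_n$: $$D(z)\,\overline D(z)(u\wedge v)\succeq u\wedge v\qquad\text{and}\qquad \overline D(z)\,D(z)(u\wedge v)\succeq u\wedge v .$$
   Context: $\bigwedge V_n=\bigoplus_{r\ge0}\bigwedge^rV_n$ is the graded associative $\mathcal A$-semialgebra with product $\wedge$ such that $\bigwedge^0V_n=\mathcal A$, $\bigwedge^1V_n=V_n$, and for $r\ge2$, $\bigwedge^rV_n$ is the free $\mathcal A$-module with basis $\{b_I,b_I':|I|=r\}$, $b_I=b_{i_1}\wedge\cdots\wedge b_{i_r}$ for $I=\{i_1<\dots<i_r\}\subseteq\{0,\dots,n-1\}$. For $r\ge2$ the negation map $(-)$ is the $\mathcal A$-linear involution of $\bigwedge^rV_n$ exchanging $b_I,b_I'$, compatible with $\wedge$; $b_i\wedge b_i=\mathbb 0$ and $u\wedge w=(-)(w\wedge u)$ for $u,w\in V_n$. A quasi-zero is an element $x+(-)x$; $x\succeq y$ means $x=y+d$ with $d$ in the ideal generated by quasi-zeros and all $w\wedge w$ ($w\in V_n$), coefficientwise for power series in $z$. $D(z)=\sum_iD_iz^i$, $D_i\in\operatorname{End}_{\mathcal A}(\bigwedge V_n)$ degree-preserving, $D(z)(x\wedge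 y)=D(z)x\wedge D(z)y$, $D_iv=f^i(v)$ for $v\in V_n$ (so $D_1=f$ on $V_n$). On $\bigwedge^2V_n$, $\overline D(z)(x\wedge y)=x\wedge y+(f(y)\wedge x+y\wedge f(x))z+(f(x)\wedge f(y))z^2$ for $x,y\in V_n$, extended additively and coefficientwise to power series in $z$. *)

theory Defs
  imports Main
begin

text \<open>The index type 'n (finite, CARD('n) = n) stands for the basis
 indices 0..n-1.  V_n is  'n \<Rightarrow> 'a  (coordinates w.r.t. b_i).
 An element of the second exterior power is encoded as  x :: 'n \<Rightarrow> 'n \<Rightarrow> 'a  with
 zero diagonal, where  x i j  (i \<noteq> j) is the coefficient of  b_i \<and> b_j; for i<j this
 is the coefficient of b_{ij}, for i>j the coefficient of b_{ji}' = (-) b_{ji}.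
 A power series in z with coefficients in the second exterior power is a map
 nat \<Rightarrow> ('n \<Rightarrow> 'n \<Rightarrow> 'a).\<close>

definition basis :: "'n \<Rightarrow> 'n \<Rightarrow> 'a::comm_semiring_1" where
  "basis i = (\<lambda>j. if j = i then 1 else 0)"

definition wedge :: "('n \<Rightarrow> 'a::comm_semiring_1) \<Rightarrow> ('n \<Rightarrow> 'a) \<Rightarrow> 'n \<Rightarrow> 'n \<Rightarrow> 'a" where
  "wedge u v = (\<lambda>i j. if i = j then 0 else u i * v j)"

definition zero2 :: "'n \<Rightarrow> 'n \<Rightarrow> 'a::comm_semiring_1" where
  "zero2 = (\<lambda>i j. 0)"

definition add2 :: "('n \<Rightarrow> 'n \<Rightarrow> 'a::comm_semiring_1) \<Rightarrow> ('n \<Rightarrow> 'n \<Rightarrow> 'a) \<Rightarrow> 'n \<Rightarrow> 'n \<Rightarrow> 'a" where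
  "add2 x y = (\<lambda>i j. x i j + y i j)"

definition smult2 :: "'a::comm_semiring_1 \<Rightarrow> ('n \<Rightarrow> 'n \<Rightarrow> 'a) \<Rightarrow> 'n \<Rightarrow> 'n \<Rightarrow> 'a" where
  "smult2 c x = (\<lambda>i j. c * x i j)"

text \<open>Negation map (-): exchanges b_I and b_I'.\<close>
definition neg2 :: "('n \<Rightarrow> 'n \<Rightarrow> 'a::comm_semiring_1) \<Rightarrow> 'n \<Rightarrow> 'n \<Rightarrow> 'a" where
  "neg2 x = (\<lambda>i j. x j i)"

definition is_wedge2 :: "('n \<Rightarrow> 'n \<Rightarrow> 'a::comm_semiring_1) \<Rightarrow> bool" where
  "is_wedge2 x \<longleftrightarrow> (\<forall>i. x i i = 0)"

text \<open>Degree-2 part of the ideal generated by the quasi-zeros and all w \<and> w: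
 the A-span of the degree-2 generators (no generators live in degree < 2).\<close>
inductive_set qz_ideal2 :: "('n \<Rightarrow> 'n \<Rightarrow> 'a::comm_semiring_1) set" where
  zero: "zero2 \<in> qz_ideal2"
| quasi_zero: "is_wedge2 e \<Longrightarrow> add2 e (neg2 e) \<in> qz_ideal2"
| self_wedge: "wedge w w \<in> qz_ideal2"
| add: "d \<in> qz_ideal2 \<Longrightarrow> d' \<in> qz_ideal2 \<Longrightarrow> add2 d d' \<in> qz_ideal2"
| smult: "d \<in> qz_ideal2 \<Longrightarrow> smult2 c d \<in> qz_ideal2"

definition succeq2 :: "('n \<Rightarrow> 'n \<Rightarrow> 'a::comm_semiring_1) \<Rightarrow> ('n \<Rightarrow> 'n \<Rightarrow> 'a) \<Rightarrow> bool" where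
  "succeq2 x y \<longleftrightarrow> (\<exists>d \<in> qz_ideal2. x = add2 y d)"

definition succeq_ser :: "(nat \<Rightarrow> 'n \<Rightarrow> 'n \<Rightarrow> 'a::comm_semiring_1) \<Rightarrow> (nat \<Rightarrow> 'n \<Rightarrow> 'n \<Rightarrow> 'a) \<Rightarrow> bool" where
  "succeq_ser X Y \<longleftrightarrow> (\<forall>k. succeq2 (X k) (Y k))"

definition const_ser :: "('n \<Rightarrow> 'n \<Rightarrow> 'a::comm_semiring_1) \<Rightarrow> nat \<Rightarrow> 'n \<Rightarrow> 'n \<Rightarrow> 'a" where
  "const_ser x = (\<lambda>k. if k = 0 then x else zero2)"

definition is_linear_endo :: "(('n \<Rightarrow> 'a::comm_semiring_1) \<Rightarrow> ('n \<Rightarrow> 'a)) \<Rightarrow> bool" where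
  "is_linear_endo f \<longleftrightarrow>
     (\<forall>u v. f (\<lambda>i. u i + v i) = (\<lambda>i. f u i + f v i)) \<and>
     (\<forall>c u. f (\<lambda>i. c * u i) = (\<lambda>i. c * f u i))"

text \<open>D_k on the exterior square: A-linear, determined on basis elements b_i \<and> b_j by
 D(z)(b_i \<and> b_j) = D(z) b_i \<and> D(z) b_j, D_p v = f^p v.\<close>
definition HS_D2 :: "(('n::finite \<Rightarrow> 'a::comm_semiring_1) \<Rightarrow> ('n \<Rightarrow> 'a)) \<Rightarrow> nat \<Rightarrow>
    ('n \<Rightarrow> 'n \<Rightarrow> 'a) \<Rightarrow> 'n \<Rightarrow> 'n \<Rightarrow> 'a" where
  "HS_D2 f k x = (\<lambda>a b. \<Sum>i\<in>UNIV. \<Sum>j\<in>UNIV. if i = j then 0 else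
      x i j * (\<Sum>p\<le>k. wedge ((f ^^ p) (basis i)) ((f ^^ (k - p)) (basis j)) a b))"

definition HS_D_ser :: "(('n::finite \<Rightarrow> 'a::comm_semiring_1) \<Rightarrow> ('n \<Rightarrow> 'a)) \<Rightarrow>
    (nat \<Rightarrow> 'n \<Rightarrow> 'n \<Rightarrow> 'a) \<Rightarrow> nat \<Rightarrow> 'n \<Rightarrow> 'n \<Rightarrow> 'a" where
  "HS_D_ser f S = (\<lambda>k a b. \<Sum>m\<le>k. HS_D2 f (k - m) (S m) a b)"

definition Dbar_wedge :: "(('n \<Rightarrow> 'a::comm_semiring_1) \<Rightarrow> ('n \<Rightarrow> 'a)) \<Rightarrow> ('n \<Rightarrow> 'a) \<Rightarrow> ('n \<Rightarrow> 'a) \<Rightarrow>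
    nat \<Rightarrow> 'n \<Rightarrow> 'n \<Rightarrow> 'a" where
  "Dbar_wedge f x y = (\<lambda>k.
     if k = 0 then wedge x y
     else if k = 1 then add2 (wedge (f y) x) (wedge y (f x))
     else if k = 2 then wedge (f x) (f y)
     else zero2)"

definition Dbar2 :: "(('n::finite \<Rightarrow> 'a::comm_semiring_1) \<Rightarrow> ('n \<Rightarrow> 'a)) \<Rightarrow> nat \<Rightarrow>
    ('n \<Rightarrow> 'n \<Rightarrow> 'a) \<Rightarrow> 'n \<Rightarrow> 'n \<Rightarrow> 'a" where
  "Dbar2 f k x = (\<lambda>a b. \<Sum>i\<in>UNIV. \<Sum>j\<in>UNIV. if i = j then 0 else
      x i j * Dbar_wedge f (basis i) (basis j) k a b)"

definition Dbar_ser :: "(('n::finite \<Rightarrow> 'a::comm_semiring_1) \<Rightarrow> ('n \<Rightarrow> 'a)) \<Rightarrow>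
    (nat \<Rightarrow> 'n \<Rightarrow> 'n \<Rightarrow> 'a) \<Rightarrow> nat \<Rightarrow> 'n \<Rightarrow> 'n \<Rightarrow> 'a" where
  "Dbar_ser f S = (\<lambda>k a b. \<Sum>m\<le>k. Dbar2 f (k - m) (S m) a b)"

end

theory Submission
  imports Defs "HOL-Library.Function_Algebras" "HOL-Library.Countable"
begin

(*
  An element of the exterior square is a matrix X with zero diagonal, the negation map (-) is
  transposition, and the quasi-zeros together with the squares w \<and> w span exactly the symmetric
  matrices with zero diagonal. If F is the matrix of f, then D(z) acts by X \<mapsto> A X A\<^sup>T with
  A = \<Sum>\<^sub>p F\<^sup>p z\<^sup>p, and the quasi-inverse by X \<mapsto> X + z (F X\<^sup>T + X\<^sup>T F\<^sup>T) + z\<^sup>2 F X F\<^sup>T, which is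
  (1 - zF) X (1 - zF)\<^sup>T with -X replaced by X\<^sup>T. So both composites fix X modulo symmetric
  matrices. As there is no subtraction, this is proved coefficientwise: by induction on the degree,
  using A = 1 + z F A, every coefficient of positive degree is symmetric; the diagonal entries
  discarded when truncating to the exterior square only contribute symmetric terms.
*)

section \<open>Matrices\<close>

type_synonym ('n, 'a) mat = "'n \<Rightarrow> 'n \<Rightarrow> 'a"

lemma sum_apply: "(\<Sum>m\<in>A. g m) x = (\<Sum>m\<in>A. g m x)"
  by (induction A rule: infinite_finite_induct) auto

definition mat_mul :: "('n::finite, 'a::comm_semiring_1) mat \<Rightarrow> ('n, 'a) mat \<Rightarrow> ('n, 'a) mat"
    (infixl "\<cdot>" 70) where
  "A \<cdot> B = (\<lambda>a b. \<Sum>c\<in>UNIV. A a c * B c b)"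

definition mtrans :: "('n, 'a) mat \<Rightarrow> ('n, 'a) mat" where
  "mtrans M = (\<lambda>a b. M b a)"

definition mat_one :: "('n, 'a::comm_semiring_1) mat" where
  "mat_one = (\<lambda>a b. if a = b then 1 else 0)"

definition offdiag :: "('n, 'a::comm_semiring_1) mat \<Rightarrow> ('n, 'a) mat" where
  "offdiag M = (\<lambda>a b. if a = b then 0 else M a b)"

definition diagpart :: "('n, 'a::comm_semiring_1) mat \<Rightarrow> ('n, 'a) mat" where
  "diagpart M = (\<lambda>a b. if a = b then M a b else 0)"

definition outer :: "('n \<Rightarrow> 'a::comm_semiring_1) \<Rightarrow> ('n \<Rightarrow> 'a) \<Rightarrow> ('n, 'a) mat" where
  "outer x y = (\<lambda>a b. x a * y b)"

definition mat_vec :: "('n::finite, 'a::comm_semiring_1) mat \<Rightarrow> ('n \<Rightarrow> 'a) \<Rightarrow> 'n \<Rightarrow> 'a"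
    (infixl "*v" 70) where
  "A *v x = (\<lambda>a. \<Sum>c\<in>UNIV. A a c * x c)"

primrec mat_pow :: "('n::finite, 'a::comm_semiring_1) mat \<Rightarrow> nat \<Rightarrow> ('n, 'a) mat" where
  "mat_pow F 0 = mat_one"
| "mat_pow F (Suc p) = F \<cdot> mat_pow F p"

lemma mult_delta_left [simp]: "(if P then 1 else 0) * x = (if P then x else (0::'a::semiring_1))"
  and mult_delta_right [simp]: "x * (if P then 1 else 0) = (if P then x else (0::'a::semiring_1))"
  by simp_all

lemma mat_mul_assoc: "A \<cdot> B \<cdot> C = A \<cdot> (B \<cdot> C)"
proof (intro ext)
  fix a b
  have "(A \<cdot> B \<cdot> C) a b = (\<Sum>d\<in>UNIV. \<Sum>c\<in>UNIV. A a c * B c d * C d b)"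
    by (simp add: mat_mul_def sum_distrib_right)
  also have "\<dots> = (\<Sum>c\<in>UNIV. \<Sum>d\<in>UNIV. A a c * B c d * C d b)"
    by (rule sum.swap)
  also have "\<dots> = (A \<cdot> (B \<cdot> C)) a b"
    by (simp add: mat_mul_def sum_distrib_left mult.assoc)
  finally show "(A \<cdot> B \<cdot> C) a b = (A \<cdot> (B \<cdot> C)) a b" .
qed

lemma mat_mul_add_left: "(A + B) \<cdot> C = A \<cdot> C + B \<cdot> C"
  and mat_mul_add_right: "A \<cdot> (B + C) = A \<cdot> B + A \<cdot> C"
  by (auto simp: mat_mul_def fun_eq_iff distrib_left distrib_right sum.distrib)

lemma mat_mul_zero_left [simp]: "0 \<cdot> A = 0"
  and mat_mul_zero_right [simp]: "A \<cdot> 0 = 0"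
  by (auto simp: mat_mul_def fun_eq_iff)

lemma mat_mul_sum_left: "(\<Sum>m\<in>S. A m) \<cdot> B = (\<Sum>m\<in>S. A m \<cdot> B)"
  and mat_mul_sum_right: "B \<cdot> (\<Sum>m\<in>S. A m) = (\<Sum>m\<in>S. B \<cdot> A m)"
  unfolding mat_mul_def fun_eq_iff sum_apply sum_distrib_left sum_distrib_right
  by (auto intro!: sum.swap)

lemma mat_one_mul [simp]: "mat_one \<cdot> A = A"
  and mat_mul_one [simp]: "A \<cdot> mat_one = A"
  by (auto simp: mat_mul_def mat_one_def fun_eq_iff)

lemma mtrans_mtrans [simp]: "mtrans (mtrans M) = M"
  and mtrans_add: "mtrans (A + B) = mtrans A + mtrans B"
  and mtrans_zero [simp]: "mtrans 0 = 0"
  and mtrans_mat_one [simp]: "mtrans mat_one = mat_one"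
  by (auto simp: mtrans_def mat_one_def fun_eq_iff)

lemma mtrans_mat_mul: "mtrans (A \<cdot> B) = mtrans B \<cdot> mtrans A"
  by (simp add: mtrans_def mat_mul_def fun_eq_iff mult.commute)

lemma offdiag_add: "offdiag (A + B) = offdiag A + offdiag B"
  and offdiag_offdiag [simp]: "offdiag (offdiag M) = offdiag M"
  and offdiag_zero [simp]: "offdiag 0 = 0"
  and mtrans_diagpart [simp]: "mtrans (diagpart M) = diagpart M"
  and offdiag_add_diagpart: "offdiag M + diagpart M = M"
  by (auto simp: offdiag_def diagpart_def mtrans_def fun_eq_iff)

lemma offdiag_sum: "offdiag (\<Sum>m\<in>S. A m) = (\<Sum>m\<in>S. offdiag (A m))"
  by (auto simp: offdiag_def fun_eq_iff sum_apply)

lemma mat_vec_mat_mul: "A *v (B *v x) = (A \<cdot> B) *v x"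
proof (intro ext)
  fix a
  have "(A *v (B *v x)) a = (\<Sum>c\<in>UNIV. \<Sum>d\<in>UNIV. A a c * B c d * x d)"
    by (simp add: mat_vec_def sum_distrib_left mult.assoc)
  also have "\<dots> = (\<Sum>d\<in>UNIV. \<Sum>c\<in>UNIV. A a c * B c d * x d)"
    by (rule sum.swap)
  also have "\<dots> = ((A \<cdot> B) *v x) a"
    by (simp add: mat_vec_def mat_mul_def sum_distrib_right)
  finally show "(A *v (B *v x)) a = ((A \<cdot> B) *v x) a" .
qed

lemma sandwich_apply: "(A \<cdot> X \<cdot> B) a b = (\<Sum>i\<in>UNIV. \<Sum>j\<in>UNIV. X i j * (A a i * B j b))"
proof -
  have "(A \<cdot> X \<cdot> B) a b = (\<Sum>j\<in>UNIV. \<Sum>i\<in>UNIV. A a i * X i j * B j b)"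
    by (simp add: mat_mul_def sum_distrib_right)
  also have "\<dots> = (\<Sum>i\<in>UNIV. \<Sum>j\<in>UNIV. X i j * (A a i * B j b))"
    by (subst sum.swap) (simp add: ac_simps)
  finally show ?thesis .
qed

lemma outer_mat_vec: "outer (A *v x) (B *v y) = A \<cdot> outer x y \<cdot> mtrans B"
  by (simp add: fun_eq_iff sandwich_apply outer_def mat_vec_def mtrans_def sum_product ac_simps)

lemma mat_one_mat_vec [simp]: "mat_one *v x = x"
  by (simp add: mat_vec_def mat_one_def fun_eq_iff)

lemma outer_mat_vec_left: "outer (A *v x) y = A \<cdot> outer x y"
  and outer_mat_vec_right: "outer x (B *v y) = outer x y \<cdot> mtrans B"
  using outer_mat_vec[of A x mat_one y] outer_mat_vec[of mat_one x B y] by simp_all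

lemma mtrans_outer: "mtrans (outer x y) = outer y x"
  by (auto simp: mtrans_def outer_def mult.commute)

lemma mtrans_add_mtrans: "mtrans (X + mtrans X) = X + mtrans (X :: ('n, 'a::comm_semiring_1) mat)"
  by (intro ext) (simp add: mtrans_def add.commute)

lemma symmetric_add: "mtrans A = A \<Longrightarrow> mtrans B = B \<Longrightarrow> mtrans (A + B) = A + B"
  by (simp add: mtrans_add)

lemma mtrans_sandwich_symmetric:
  "mtrans M = M \<Longrightarrow> mtrans (A \<cdot> M \<cdot> mtrans A) = A \<cdot> M \<cdot> mtrans A"
  by (simp add: mtrans_mat_mul mat_mul_assoc)

lemma offdiag_add_mtrans_symmetric: "mtrans (offdiag M + mtrans M) = offdiag M + mtrans M"
  by (simp add: fun_eq_iff offdiag_def mtrans_def add.commute)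

lemma symmetric_if_offdiag_eq:
  assumes "offdiag M = offdiag N" and "mtrans N = N"
  shows "mtrans M = M"
proof (intro ext)
  fix a b
  show "mtrans M a b = M a b"
  proof (cases "a = b")
    case False
    then have "M a b = N a b" and "M b a = N b a"
      using fun_cong[OF fun_cong[OF assms(1)], of a b] fun_cong[OF fun_cong[OF assms(1)], of b a]
      by (auto simp: offdiag_def)
    moreover have "N b a = N a b"
      using fun_cong[OF fun_cong[OF assms(2)], of a b] by (simp add: mtrans_def)
    ultimately show ?thesis by (simp add: mtrans_def)
  qed (simp add: mtrans_def)
qed

section \<open>Matrix form of D(z) and of its quasi-inverse\<close>

definition mat_of :: "(('n \<Rightarrow> 'a::comm_semiring_1) \<Rightarrow> ('n \<Rightarrow> 'a)) \<Rightarrow> ('n, 'a) mat" where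
  "mat_of f = (\<lambda>a c. f (basis c) a)"

lemma linear_endo_sum:
  assumes "is_linear_endo f" and "finite S"
  shows "f (\<lambda>i. \<Sum>c\<in>S. g c i) = (\<lambda>i. \<Sum>c\<in>S. f (g c) i)"
  using assms(2)
proof (induction S rule: finite_induct)
  case empty
  have "f (\<lambda>i. 0 * 0) = (\<lambda>i. 0 * f (\<lambda>i. 0) i)"
    using assms(1) unfolding is_linear_endo_def by (rule conjE) (erule allE)+
  then show ?case by simp
next
  case (insert c S)
  then show ?case using assms(1) unfolding is_linear_endo_def by simp
qed

lemma linear_endo_eq_mat_vec:
  fixes f :: "('n::finite \<Rightarrow> 'a::comm_semiring_1) \<Rightarrow> ('n \<Rightarrow> 'a)"
  assumes "is_linear_endo f"
  shows "f x = mat_of f *v x"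
proof -
  have "x = (\<lambda>i. \<Sum>c\<in>UNIV. x c * basis c i)"
    by (simp add: basis_def fun_eq_iff)
  then have "f x = f (\<lambda>i. \<Sum>c\<in>UNIV. x c * basis c i)"
    by (rule arg_cong)
  also have "\<dots> = (\<lambda>i. \<Sum>c\<in>UNIV. f (\<lambda>i. x c * basis c i) i)"
    by (rule linear_endo_sum[OF assms finite])
  also have "\<dots> = mat_of f *v x"
    using assms by (simp add: is_linear_endo_def mat_of_def mat_vec_def mult.commute)
  finally show ?thesis .
qed

lemma funpow_eq_mat_pow:
  fixes f :: "('n::finite \<Rightarrow> 'a::comm_semiring_1) \<Rightarrow> ('n \<Rightarrow> 'a)"
  assumes "is_linear_endo f"
  shows "(f ^^ p) x = mat_pow (mat_of f) p *v x"
proof (induction p)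
  case (Suc p)
  have "(f ^^ Suc p) x = f ((f ^^ p) x)"
    by simp
  also have "\<dots> = mat_of f *v (f ^^ p) x"
    by (rule linear_endo_eq_mat_vec[OF assms])
  also have "\<dots> = mat_pow (mat_of f) (Suc p) *v x"
    by (simp only: Suc.IH mat_vec_mat_mul mat_pow.simps)
  finally show ?case .
qed simp

definition mat_linear :: "(('n::finite, 'a::comm_semiring_1) mat \<Rightarrow> ('n, 'a) mat) \<Rightarrow> bool" where
  "mat_linear \<Phi> \<longleftrightarrow>
     (\<forall>X a b. \<Phi> X a b = (\<Sum>i\<in>UNIV. \<Sum>j\<in>UNIV. X i j * \<Phi> (outer (basis i) (basis j)) a b))"

lemma sandwich_outer_basis: "(A \<cdot> outer (basis i) (basis j) \<cdot> B) a b = A a i * B j b"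
  by (simp add: sandwich_apply outer_def basis_def if_distrib[of "\<lambda>t. t * _"] cong: if_cong)

lemma mat_linearI:
  assumes "\<And>X a b. \<Phi> X a b = (\<Sum>i\<in>UNIV. \<Sum>j\<in>UNIV. X i j * \<Phi> (outer (basis i) (basis j)) a b)"
  shows "mat_linear \<Phi>"
  unfolding mat_linear_def by (intro allI assms)

lemma mat_linearD:
  "mat_linear \<Phi> \<Longrightarrow> \<Phi> X a b = (\<Sum>i\<in>UNIV. \<Sum>j\<in>UNIV. X i j * \<Phi> (outer (basis i) (basis j)) a b)"
  unfolding mat_linear_def by (elim allE) assumption

lemma mat_linear_sandwich: "mat_linear (\<lambda>X. A \<cdot> X \<cdot> B)"
  by (rule mat_linearI) (simp only: sandwich_outer_basis, rule sandwich_apply)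

lemma mat_linear_sandwich_mtrans: "mat_linear (\<lambda>X. A \<cdot> mtrans X \<cdot> B)"
proof (rule mat_linearI)
  fix X a b
  have "(A \<cdot> mtrans X \<cdot> B) a b = (\<Sum>i\<in>UNIV. \<Sum>j\<in>UNIV. X j i * (A a i * B j b))"
    by (simp add: sandwich_apply mtrans_def)
  also have "\<dots> = (\<Sum>j\<in>UNIV. \<Sum>i\<in>UNIV. X j i * (A a i * B j b))"
    by (rule sum.swap)
  finally show "(A \<cdot> mtrans X \<cdot> B) a b
      = (\<Sum>i\<in>UNIV. \<Sum>j\<in>UNIV. X i j * (A \<cdot> mtrans (outer (basis i) (basis j)) \<cdot> B) a b)"
    by (simp only: mtrans_outer sandwich_outer_basis)
qed

lemma mat_linear_add:
  assumes "mat_linear \<Phi>" and "mat_linear \<Psi>"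
  shows "mat_linear (\<lambda>X. \<Phi> X + \<Psi> X)"
proof (rule mat_linearI)
  fix X a b
  show "(\<Phi> X + \<Psi> X) a b = (\<Sum>i\<in>UNIV. \<Sum>j\<in>UNIV.
      X i j * (\<Phi> (outer (basis i) (basis j)) + \<Psi> (outer (basis i) (basis j))) a b)"
    by (simp only: plus_fun_apply mat_linearD[OF assms(1), of X] mat_linearD[OF assms(2), of X]
        distrib_left sum.distrib)
qed

lemma mat_linear_sum:
  assumes "\<And>p. p \<in> S \<Longrightarrow> mat_linear (\<Phi> p)"
  shows "mat_linear (\<lambda>X. \<Sum>p\<in>S. \<Phi> p X)"
proof (rule mat_linearI)
  fix X a b
  have "(\<Sum>p\<in>S. \<Phi> p X) a b
      = (\<Sum>p\<in>S. \<Sum>i\<in>UNIV. \<Sum>j\<in>UNIV. X i j * \<Phi> p (outer (basis i) (basis j)) a b)"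
    unfolding sum_apply by (rule sum.cong[OF refl]) (rule mat_linearD[OF assms])
  also have "\<dots> = (\<Sum>i\<in>UNIV. \<Sum>j\<in>UNIV. \<Sum>p\<in>S. X i j * \<Phi> p (outer (basis i) (basis j)) a b)"
    by (subst sum.swap) (rule sum.cong[OF refl], rule sum.swap)
  finally show "(\<Sum>p\<in>S. \<Phi> p X) a b = (\<Sum>i\<in>UNIV. \<Sum>j\<in>UNIV.
      X i j * (\<Sum>p\<in>S. \<Phi> p (outer (basis i) (basis j))) a b)"
    by (simp only: sum_apply sum_distrib_left)
qed

lemma mat_linear_offdiag_extension:
  assumes "mat_linear \<Phi>"
  shows "(\<Sum>i\<in>UNIV. \<Sum>j\<in>UNIV. if i = j then 0 else x i j * offdiag (\<Phi> (outer (basis i) (basis j))) a b)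
    = offdiag (\<Phi> (offdiag x)) a b"
proof (cases "a = b")
  case False
  have "\<Phi> (offdiag x) a b
      = (\<Sum>i\<in>UNIV. \<Sum>j\<in>UNIV. offdiag x i j * \<Phi> (outer (basis i) (basis j)) a b)"
    by (rule mat_linearD[OF assms])
  with False show ?thesis
    by (auto simp: offdiag_def intro!: sum.cong)
qed (simp add: offdiag_def cong: if_cong)

lemma wedge_eq_offdiag_outer: "wedge u v = offdiag (outer u v)"
  by (simp add: wedge_def offdiag_def outer_def fun_eq_iff)

lemma add2_eq_plus: "add2 x y = x + y"
  by (simp add: add2_def fun_eq_iff)

lemma zero2_eq_zero: "zero2 = 0"
  by (simp add: zero2_def fun_eq_iff)

definition hs_op :: "('n::finite, 'a::comm_semiring_1) mat \<Rightarrow> nat \<Rightarrow> ('n, 'a) mat \<Rightarrow> ('n, 'a) mat" where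
  "hs_op F k X = (\<Sum>p\<le>k. mat_pow F p \<cdot> X \<cdot> mtrans (mat_pow F (k - p)))"

lemma mat_linear_hs_op: "mat_linear (hs_op F k)"
  unfolding hs_op_def by (rule mat_linear_sum) (rule mat_linear_sandwich)

lemma hs_op_0 [simp]: "hs_op F 0 X = X"
  by (simp add: hs_op_def)

lemma hs_op_zero [simp]: "hs_op F k 0 = 0"
  by (simp add: hs_op_def)

lemma hs_op_Suc: "hs_op F (Suc k) X = F \<cdot> hs_op F k X + X \<cdot> mtrans (mat_pow F (Suc k))"
  unfolding hs_op_def sum.atMost_Suc_shift
  by (simp add: mat_mul_sum_right mat_mul_assoc add.commute)

lemma HS_D2_eq:
  fixes f :: "('n::finite \<Rightarrow> 'a::comm_semiring_1) \<Rightarrow> ('n \<Rightarrow> 'a)"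
  assumes "is_linear_endo f"
  shows "HS_D2 f k x = offdiag (hs_op (mat_of f) k (offdiag x))"
proof (intro ext)
  fix a b
  have unit: "(\<Sum>p\<le>k. wedge ((f ^^ p) (basis i)) ((f ^^ (k - p)) (basis j)) a b)
      = offdiag (hs_op (mat_of f) k (outer (basis i) (basis j))) a b" for i j
    by (simp add: funpow_eq_mat_pow[OF assms] wedge_eq_offdiag_outer outer_mat_vec hs_op_def
        offdiag_sum sum_apply)
  have "HS_D2 f k x a b = (\<Sum>i\<in>UNIV. \<Sum>j\<in>UNIV.
      if i = j then 0 else x i j * offdiag (hs_op (mat_of f) k (outer (basis i) (basis j))) a b)"
    by (simp only: HS_D2_def unit)
  then show "HS_D2 f k x a b = offdiag (hs_op (mat_of f) k (offdiag x)) a b"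
    by (simp only: mat_linear_offdiag_extension[OF mat_linear_hs_op])
qed

definition dbar_op :: "('n::finite, 'a::comm_semiring_1) mat \<Rightarrow> nat \<Rightarrow> ('n, 'a) mat \<Rightarrow> ('n, 'a) mat" where
  "dbar_op F k X =
     (if k = 0 then X
      else if k = 1 then F \<cdot> mtrans X + mtrans X \<cdot> mtrans F
      else if k = 2 then F \<cdot> X \<cdot> mtrans F
      else 0)"

lemma mat_linear_dbar_op: "mat_linear (dbar_op F k)"
proof -
  have "mat_linear (\<lambda>X. F \<cdot> mtrans X + mtrans X \<cdot> mtrans F)"
    using mat_linear_add[OF mat_linear_sandwich_mtrans[of F mat_one]
        mat_linear_sandwich_mtrans[of mat_one "mtrans F"]]
    by simp
  moreover have "mat_linear (\<lambda>X. X)"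
    using mat_linear_sandwich[of mat_one mat_one] by simp
  moreover have "mat_linear (\<lambda>X. 0)"
    by (simp add: mat_linear_def)
  ultimately show ?thesis
    using mat_linear_sandwich[of F "mtrans F"] unfolding dbar_op_def
    by (cases "k = 0"; cases "k = 1"; cases "k = 2") simp_all
qed

lemma Dbar_wedge_eq:
  fixes f :: "('n::finite \<Rightarrow> 'a::comm_semiring_1) \<Rightarrow> ('n \<Rightarrow> 'a)"
  assumes "is_linear_endo f"
  shows "Dbar_wedge f u v k = offdiag (dbar_op (mat_of f) k (outer u v))"
proof -
  have fu: "f u = mat_of f *v u" and fv: "f v = mat_of f *v v"
    by (rule linear_endo_eq_mat_vec[OF assms])+
  show ?thesis
    unfolding Dbar_wedge_def dbar_op_def fu fv
    by (simp add: wedge_eq_offdiag_outer add2_eq_plus zero2_eq_zero offdiag_add outer_mat_vec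
        outer_mat_vec_left outer_mat_vec_right mtrans_outer)
qed

lemma Dbar2_eq:
  fixes f :: "('n::finite \<Rightarrow> 'a::comm_semiring_1) \<Rightarrow> ('n \<Rightarrow> 'a)"
  assumes "is_linear_endo f"
  shows "Dbar2 f k x = offdiag (dbar_op (mat_of f) k (offdiag x))"
proof (intro ext)
  fix a b
  have "Dbar2 f k x a b = (\<Sum>i\<in>UNIV. \<Sum>j\<in>UNIV.
      if i = j then 0 else x i j * offdiag (dbar_op (mat_of f) k (outer (basis i) (basis j))) a b)"
    by (simp only: Dbar2_def Dbar_wedge_eq[OF assms])
  then show "Dbar2 f k x a b = offdiag (dbar_op (mat_of f) k (offdiag x)) a b"
    by (simp only: mat_linear_offdiag_extension[OF mat_linear_dbar_op])
qed

section \<open>Symmetry of the coefficients of positive degree\<close>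

definition hs_conv :: "('n::finite, 'a::comm_semiring_1) mat \<Rightarrow> (nat \<Rightarrow> ('n, 'a) mat) \<Rightarrow> nat \<Rightarrow> ('n, 'a) mat" where
  "hs_conv F Y k = (\<Sum>m\<le>k. hs_op F (k - m) (Y m))"

definition hs_tail :: "('n::finite, 'a::comm_semiring_1) mat \<Rightarrow> (nat \<Rightarrow> ('n, 'a) mat) \<Rightarrow> nat \<Rightarrow> ('n, 'a) mat" where
  "hs_tail F Y k = (\<Sum>m\<le>k. Y m \<cdot> mtrans (mat_pow F (k - m)))"

lemma hs_conv_0 [simp]: "hs_conv F Y 0 = Y 0"
  by (simp add: hs_conv_def)

lemma hs_tail_Suc: "hs_tail F Y (Suc k) = hs_tail F Y k \<cdot> mtrans F + Y (Suc k)"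
proof -
  have "Y m \<cdot> mtrans (mat_pow F (Suc k - m)) = Y m \<cdot> mtrans (mat_pow F (k - m)) \<cdot> mtrans F"
    if "m \<le> k" for m
    using that by (simp add: Suc_diff_le mtrans_mat_mul mat_mul_assoc)
  then show ?thesis
    by (simp add: hs_tail_def mat_mul_sum_left)
qed

lemma hs_conv_Suc: "hs_conv F Y (Suc k) = F \<cdot> hs_conv F Y k + hs_tail F Y (Suc k)"
proof -
  have "hs_op F (Suc k - m) (Y m) = F \<cdot> hs_op F (k - m) (Y m) + Y m \<cdot> mtrans (mat_pow F (Suc k - m))"
    if "m \<le> k" for m
    using that by (simp add: Suc_diff_le hs_op_Suc)
  then show ?thesis
    by (simp add: hs_conv_def hs_tail_def sum.distrib mat_mul_sum_right add_ac)
qed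

lemma hs_conv_Suc_Suc:
  assumes "mtrans (hs_conv F Y (Suc k)) = hs_conv F Y (Suc k)"
  shows "hs_conv F Y (Suc (Suc k)) = F \<cdot> mtrans (hs_conv F Y k) \<cdot> mtrans F
    + (hs_tail F Y (Suc k) \<cdot> mtrans F + mtrans (hs_tail F Y (Suc k) \<cdot> mtrans F)) + Y (Suc (Suc k))"
proof -
  have "hs_conv F Y (Suc (Suc k)) = F \<cdot> mtrans (hs_conv F Y (Suc k)) + hs_tail F Y (Suc (Suc k))"
    by (simp add: hs_conv_Suc[of F Y "Suc k"] assms)
  also have "\<dots> = F \<cdot> mtrans (F \<cdot> hs_conv F Y k + hs_tail F Y (Suc k)) + hs_tail F Y (Suc (Suc k))"
    by (simp only: hs_conv_Suc)
  finally show ?thesis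
    by (simp add: hs_tail_Suc[of F Y "Suc k"] mtrans_add mtrans_mat_mul mat_mul_add_right
        mat_mul_assoc add_ac)
qed

lemma hs_conv_dbar_op_symmetric:
  fixes F P :: "('n::finite, 'a::comm_semiring_1) mat"
  defines "Y \<equiv> \<lambda>m. offdiag (dbar_op F m P)"
  shows "mtrans (hs_conv F Y (Suc k)) = hs_conv F Y (Suc k)"
proof -
  let ?S = "hs_conv F Y" and ?M = "offdiag P + mtrans P"
  have M_sym: "mtrans (offdiag P) + P = ?M"
    using offdiag_add_mtrans_symmetric[of P] by (simp add: mtrans_add)
  have S1: "mtrans (?S (Suc 0)) = ?S (Suc 0)"
  proof (rule symmetric_if_offdiag_eq)
    let ?X = "F \<cdot> ?M"
    have "offdiag (?S (Suc 0)) = offdiag (F \<cdot> ?M + ?M \<cdot> mtrans F)"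
      by (simp add: hs_conv_Suc hs_tail_def Y_def dbar_op_def offdiag_add mat_mul_add_left
          mat_mul_add_right add_ac)
    also have "\<dots> = offdiag (?X + mtrans ?X)"
      by (simp add: mtrans_mat_mul offdiag_add_mtrans_symmetric)
    finally show "offdiag (?S (Suc 0)) = offdiag (?X + mtrans ?X)" .
    show "mtrans (?X + mtrans ?X) = ?X + mtrans ?X"
      by (rule mtrans_add_mtrans)
  qed
  have S2: "mtrans (?S (Suc (Suc 0))) = ?S (Suc (Suc 0))"
  proof (rule symmetric_if_offdiag_eq)
    let ?T = "hs_tail F Y (Suc 0) \<cdot> mtrans F"
    show "offdiag (?S (Suc (Suc 0))) = offdiag (F \<cdot> ?M \<cdot> mtrans F + (?T + mtrans ?T))"
      unfolding hs_conv_Suc_Suc[OF S1] M_sym[symmetric]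
      by (simp add: Y_def dbar_op_def offdiag_add mat_mul_add_left mat_mul_add_right add_ac)
    show "mtrans (F \<cdot> ?M \<cdot> mtrans F + (?T + mtrans ?T)) = F \<cdot> ?M \<cdot> mtrans F + (?T + mtrans ?T)"
      by (intro symmetric_add mtrans_sandwich_symmetric offdiag_add_mtrans_symmetric mtrans_add_mtrans)
  qed
  have "mtrans (?S (Suc j)) = ?S (Suc j) \<and> mtrans (?S (Suc (Suc j))) = ?S (Suc (Suc j))" for j
  proof (induction j)
    case (Suc j)
    let ?T = "hs_tail F Y (Suc (Suc j)) \<cdot> mtrans F"
    have "Y (Suc (Suc (Suc j))) = 0"
      by (simp add: Y_def dbar_op_def)
    then have eq: "?S (Suc (Suc (Suc j))) = F \<cdot> ?S (Suc j) \<cdot> mtrans F + (?T + mtrans ?T)"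
      using hs_conv_Suc_Suc[of F Y "Suc j"] Suc.IH by simp
    have "mtrans (F \<cdot> ?S (Suc j) \<cdot> mtrans F + (?T + mtrans ?T)) = F \<cdot> ?S (Suc j) \<cdot> mtrans F + (?T + mtrans ?T)"
      using Suc.IH by (intro symmetric_add mtrans_sandwich_symmetric mtrans_add_mtrans) simp
    then have "mtrans (?S (Suc (Suc (Suc j)))) = ?S (Suc (Suc (Suc j)))"
      by (simp only: eq)
    with Suc.IH show ?case by simp
  qed (use S1 S2 in simp)
  then show ?thesis by simp
qed

definition dbar_conv :: "('n::finite, 'a::comm_semiring_1) mat \<Rightarrow> (nat \<Rightarrow> ('n, 'a) mat) \<Rightarrow> nat \<Rightarrow> ('n, 'a) mat" where
  "dbar_conv F Z k = (\<Sum>m\<le>k. dbar_op F (k - m) (Z m))"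

lemma dbar_conv_0 [simp]: "dbar_conv F Z 0 = Z 0"
  by (simp add: dbar_conv_def dbar_op_def)

lemma dbar_conv_Suc:
  "dbar_conv F Z (Suc k) = Z (Suc k) + dbar_op F 1 (Z k)
     + (case k of 0 \<Rightarrow> 0 | Suc j \<Rightarrow> F \<cdot> Z j \<cdot> mtrans F)"
proof (cases k)
  case 0
  then show ?thesis by (simp add: dbar_conv_def dbar_op_def add.commute)
next
  case (Suc j)
  have "dbar_op F (Suc (Suc j) - m) (Z m) = (if m = j then F \<cdot> Z j \<cdot> mtrans F else 0)"
    if "m \<le> j" for m
    using that by (auto simp: dbar_op_def)
  then have "(\<Sum>m\<le>j. dbar_op F (Suc (Suc j) - m) (Z m)) = F \<cdot> Z j \<cdot> mtrans F"
    by (simp add: sum.delta)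
  with Suc show ?thesis
    by (simp add: dbar_conv_def dbar_op_def add_ac)
qed

lemma dbar_op_hs_op_symmetric_step:
  assumes "Q1 = F \<cdot> Q0 + W \<cdot> mtrans A"
    and "F \<cdot> mtrans Q0 + G = C + A \<cdot> mtrans W"
    and "mtrans C = C"
  shows "mtrans (Q1 + dbar_op F 1 (offdiag Q0) + G) = Q1 + dbar_op F 1 (offdiag Q0) + G"
proof -
  \<comment> \<open>The diagonal of Q0, lost in offdiag Q0, is recovered from F Q0^T + G = C + A W^T.\<close>
  let ?H = "offdiag Q0"
  have Q0: "Q0 = ?H + diagpart Q0"
    by (rule offdiag_add_diagpart[symmetric])
  have Q0t: "mtrans Q0 = mtrans ?H + diagpart Q0"
    using arg_cong[OF Q0, of mtrans] by (simp only: mtrans_add mtrans_diagpart)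
  have "Q1 + dbar_op F 1 ?H + G = F \<cdot> ?H + mtrans ?H \<cdot> mtrans F + W \<cdot> mtrans A + (F \<cdot> mtrans Q0 + G)"
    by (subst assms(1), subst (1) Q0, subst Q0t)
      (simp add: dbar_op_def mat_mul_add_right add_ac)
  also have "\<dots> = (F \<cdot> ?H + mtrans (F \<cdot> ?H)) + (W \<cdot> mtrans A + mtrans (W \<cdot> mtrans A)) + C"
    by (simp only: assms(2)) (simp add: mtrans_mat_mul add_ac)
  finally show ?thesis
    by (simp only:) (intro symmetric_add mtrans_add_mtrans assms(3))
qed

lemma dbar_conv_hs_op_symmetric:
  fixes F W :: "('n::finite, 'a::comm_semiring_1) mat"
  defines "Z \<equiv> \<lambda>m. offdiag (hs_op F m W)"
  shows "mtrans (dbar_conv F Z (Suc k)) = dbar_conv F Z (Suc k)"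
proof (rule symmetric_if_offdiag_eq)
  let ?Q = "\<lambda>m. hs_op F m W"
  let ?G = "case k of 0 \<Rightarrow> 0 | Suc j \<Rightarrow> F \<cdot> offdiag (?Q j) \<cdot> mtrans F"
  show "offdiag (dbar_conv F Z (Suc k)) = offdiag (?Q (Suc k) + dbar_op F 1 (offdiag (?Q k)) + ?G)"
    by (cases k) (simp_all add: dbar_conv_Suc Z_def offdiag_add)
  show "mtrans (?Q (Suc k) + dbar_op F 1 (offdiag (?Q k)) + ?G) = ?Q (Suc k) + dbar_op F 1 (offdiag (?Q k)) + ?G"
  proof (cases k)
    case 0
    show ?thesis
      by (rule dbar_op_hs_op_symmetric_step[where A = F and C = 0]) (simp_all add: 0 hs_op_Suc)
  next
    case (Suc j)
    let ?C = "F \<cdot> (offdiag (?Q j) + mtrans (?Q j)) \<cdot> mtrans F"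
    show ?thesis
    proof (rule dbar_op_hs_op_symmetric_step[where A = "mat_pow F (Suc (Suc j))" and C = ?C])
      show "?Q (Suc k) = F \<cdot> ?Q k + W \<cdot> mtrans (mat_pow F (Suc (Suc j)))"
        by (simp add: Suc hs_op_Suc del: mat_pow.simps)
      show "F \<cdot> mtrans (?Q k) + ?G = ?C + mat_pow F (Suc (Suc j)) \<cdot> mtrans W"
        by (simp add: Suc hs_op_Suc[of F j] mtrans_add mtrans_mat_mul mat_mul_add_left
            mat_mul_add_right mat_mul_assoc add_ac)
      show "mtrans ?C = ?C"
        by (rule mtrans_sandwich_symmetric[OF offdiag_add_mtrans_symmetric])
    qed
  qed
qed

lemma HS_D_ser_eq:
  fixes f :: "('n::finite \<Rightarrow> 'a::comm_semiring_1) \<Rightarrow> ('n \<Rightarrow> 'a)"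
  assumes "is_linear_endo f"
  shows "HS_D_ser f S k = offdiag (hs_conv (mat_of f) (\<lambda>m. offdiag (S m)) k)"
  by (simp add: HS_D_ser_def HS_D2_eq[OF assms] hs_conv_def offdiag_sum sum_apply fun_eq_iff)

lemma Dbar_ser_eq:
  fixes f :: "('n::finite \<Rightarrow> 'a::comm_semiring_1) \<Rightarrow> ('n \<Rightarrow> 'a)"
  assumes "is_linear_endo f"
  shows "Dbar_ser f S k = offdiag (dbar_conv (mat_of f) (\<lambda>m. offdiag (S m)) k)"
  by (simp add: Dbar_ser_def Dbar2_eq[OF assms] dbar_conv_def offdiag_sum sum_apply fun_eq_iff)

lemma HS_D_ser_const_ser:
  fixes f :: "('n::finite \<Rightarrow> 'a::comm_semiring_1) \<Rightarrow> ('n \<Rightarrow> 'a)"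
  assumes "is_linear_endo f"
  shows "HS_D_ser f (const_ser x) k = offdiag (hs_op (mat_of f) k (offdiag x))"
proof -
  have const: "(\<lambda>m. offdiag (const_ser x m)) = (\<lambda>m. if m = 0 then offdiag x else 0)"
    by (simp add: const_ser_def zero2_eq_zero fun_eq_iff)
  have conv: "hs_conv F (\<lambda>m. if m = 0 then X else 0) k = hs_op F k X" for F X
    by (simp add: hs_conv_def if_distrib[of "hs_op F _"] cong: if_cong)
  show ?thesis
    unfolding HS_D_ser_eq[OF assms] const conv ..
qed

section \<open>Quasi-zeros\<close>

lemma symmetric_offdiag_in_qz_ideal2:
  fixes M :: "('n::finite, 'a::comm_semiring_1) mat"
  assumes "mtrans M = M"
  shows "offdiag M \<in> qz_ideal2"
proof -
  \<comment> \<open>Order the indices through an injection into nat; then offdiag M = e + (-) e.\<close>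
  define e where "e i j = (if to_nat i < to_nat j then M i j else 0)" for i j
  have "offdiag M i j = add2 e (neg2 e) i j" for i j
    using fun_cong[OF fun_cong[OF assms], of i j] inj_eq[OF inj_to_nat, of i j]
    by (auto simp: offdiag_def add2_def neg2_def e_def mtrans_def)
  then have "offdiag M = add2 e (neg2 e)"
    by (intro ext)
  moreover have "is_wedge2 e"
    by (simp add: is_wedge2_def e_def)
  ultimately show ?thesis
    by (simp add: qz_ideal2.quasi_zero)
qed

lemma succeq_ser_const_serI:
  assumes "X 0 = x" and "\<And>k. X (Suc k) \<in> qz_ideal2"
  shows "succeq_ser X (const_ser x)"
  unfolding succeq_ser_def succeq2_def
proof
  fix k
  show "\<exists>d\<in>qz_ideal2. X k = add2 (const_ser x k) d"
  proof (cases k)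
    case 0
    show ?thesis
      using 0 assms(1) qz_ideal2.zero
      by (intro bexI[of _ 0]) (simp_all add: const_ser_def add2_eq_plus zero2_eq_zero)
  next
    case (Suc j)
    then show ?thesis
      using assms(2) by (auto simp: const_ser_def add2_eq_plus zero2_eq_zero)
  qed
qed

theorem proposition3p4:
  fixes f :: "('n::finite \<Rightarrow> 'a::comm_semiring_1) \<Rightarrow> ('n \<Rightarrow> 'a)"
    and u v :: "'n \<Rightarrow> 'a"
  assumes "card (UNIV :: 'n set) \<ge> 2"
    and "is_linear_endo f"
  shows "succeq_ser (HS_D_ser f (Dbar_wedge f u v)) (const_ser (wedge u v)) \<and>
         succeq_ser (Dbar_ser f (HS_D_ser f (const_ser (wedge u v)))) (const_ser (wedge u v))"
proof
  let ?F = "mat_of f" and ?W = "wedge u v"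
  let ?Y = "\<lambda>m. offdiag (dbar_op ?F m (outer u v))" and ?Z = "\<lambda>m. offdiag (hs_op ?F m ?W)"
  have D_Dbar: "HS_D_ser f (Dbar_wedge f u v) = (\<lambda>k. offdiag (hs_conv ?F ?Y k))"
    by (simp add: fun_eq_iff HS_D_ser_eq[OF assms(2)] Dbar_wedge_eq[OF assms(2)])
  show "succeq_ser (HS_D_ser f (Dbar_wedge f u v)) (const_ser ?W)"
    unfolding D_Dbar
    by (rule succeq_ser_const_serI)
      (simp add: dbar_op_def wedge_eq_offdiag_outer,
       intro symmetric_offdiag_in_qz_ideal2 hs_conv_dbar_op_symmetric)
  have Dbar_D: "Dbar_ser f (HS_D_ser f (const_ser ?W)) = (\<lambda>k. offdiag (dbar_conv ?F ?Z k))"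
    by (simp add: fun_eq_iff Dbar_ser_eq[OF assms(2)] HS_D_ser_const_ser[OF assms(2)]
        wedge_eq_offdiag_outer)
  show "succeq_ser (Dbar_ser f (HS_D_ser f (const_ser ?W))) (const_ser ?W)"
    unfolding Dbar_D
    by (rule succeq_ser_const_serI)
      (simp add: wedge_eq_offdiag_outer,
       intro symmetric_offdiag_in_qz_ideal2 dbar_conv_hs_op_symmetric)
qed

end
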